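(* Let $0<p_{\min}\le p_{\max}$ be vectors in $\mathbb{R}^n$, $\mathcal{D}_p=\{p:p_{\min}\le p\le p_{\max}\}$, and let $\mathcal{I}:\mathbb{R}^n_{\ge0}\to\mathbb{R}^n$ be differentiable and type-II standard with $\mathcal{I}(\mathcal{D}_p)\subseteq\mathcal{D}_p$. Let $f(x)=\ln\mathcal{I}(e^x)$ and define the matrix $B\in\mathbb{R}^{n\times n}$ by \[ B_{ij}=\max_{p\in\mathcal{D}_p}\Big|\frac{\partial\mathcal{I}_j(p)}{\partial p_i}\,\frac{p_i}{\mathcal{I}_j(p)}\Big|=\max_{x\in\ln\mathcal{D}_p}\Big|\frac{\partial f_j(x)}{\partial x_i}\Big|, \] and assume the spectral radius satisfies $\rho(B)<1$. Let $c\in\mathbb{R}^n$ with $c>0$, let $h:\mathbb{R}_{>0}\to\mathbb{R}^m$ be differentiable with each component strictly increasing (with positive derivative), and set \[ s=(I-B)^{-1}c,\qquad \kappa(p)=h\Big(\prod_{i=1}^n p_i^{s_i}\Big). \] Assume the problem $\min_{p\in\mathcal{D}_p}\kappa(p)$ s.t. $p\ge\mathcal{I}(p)$ is feasible. Then this problem is Fast-Lipschitz: the unique fixed point $p^\star=\mathcal{I}(p^\star)$ in $\mathcal{D}_p$ is its unique Pareto optimal solution.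
   Context: Inequalities are element-wise; $\ln,\exp$ act componentwise. $\mathcal{I}$ is type-II standard if for all $p,q\ge0$: $\mathcal{I}(p)>0$ (implied by two-sided scalability), (type-II monotonicity) $p\le q\Rightarrow\mathcal{I}(p)\ge\mathcal{I}(q)$, and (type-II scalability) for all $c>1$, $\mathcal{I}(cp)>(1/c)\mathcal{I}(p)$. For a vector objective, a feasible $p$ is Pareto optimal (minimization) if no feasible $q$ has $\kappa(q)\le\kappa(p)$, $\kappa(q)\neq\kappa(p)$. A problem is Fast-Lipschitz if its unique Pareto optimal solution is the unique solution of the fixed point equation of its constraint function. *)

theory Defs
  imports "HOL-Analysis.Analysis"
begin

text \<open>Vectors in R^n are real^'n; the order on real^'n is componentwise
(less_eq_vec_def).  Strict positivity is written out componentwise.\<close>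

definition pos_vec :: "real^'n \<Rightarrow> bool" where
  "pos_vec x \<longleftrightarrow> (\<forall>i. 0 < x $ i)"

definition nonneg_vec :: "real^'n \<Rightarrow> bool" where
  "nonneg_vec x \<longleftrightarrow> (\<forall>i. 0 \<le> x $ i)"

definition type_II_standard :: "(real^'n \<Rightarrow> real^'n) \<Rightarrow> bool" where
  "type_II_standard I \<longleftrightarrow>
     (\<forall>p. nonneg_vec p \<longrightarrow> pos_vec (I p)) \<and>
     (\<forall>p q. nonneg_vec p \<longrightarrow> nonneg_vec q \<longrightarrow> p \<le> q \<longrightarrow> I q \<le> I p) \<and>
     (\<forall>p (c::real). nonneg_vec p \<longrightarrow> c > 1 \<longrightarrow>
        (\<forall>j. I (c *\<^sub>R p) $ j > (1 / c) * I p $ j))"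

definition partial_deriv :: "(real^'n \<Rightarrow> real^'n) \<Rightarrow> 'n \<Rightarrow> 'n \<Rightarrow> real^'n \<Rightarrow> real" where
  "partial_deriv I i j p = frechet_derivative I (at p) (axis i 1) $ j"

definition complex_eigenvalue :: "real^'n^'n \<Rightarrow> complex \<Rightarrow> bool" where
  "complex_eigenvalue B l \<longleftrightarrow>
     (\<exists>v :: complex^'n. v \<noteq> 0 \<and>
        (\<chi> i j. complex_of_real (B $ i $ j)) *v v = l *s v)"

definition spectral_radius_real :: "real^'n^'n \<Rightarrow> real" where
  "spectral_radius_real B = Max {cmod l | l. complex_eigenvalue B l}"

definition pareto_optimal ::
  "('a \<Rightarrow> real^'m) \<Rightarrow> 'a set \<Rightarrow> 'a \<Rightarrow> bool" where
  "pareto_optimal kappa F p \<longleftrightarrow>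
     p \<in> F \<and> \<not> (\<exists>q\<in>F. kappa q \<le> kappa p \<and> kappa q \<noteq> kappa p)"

end

theory Submission
  imports Defs
begin

(* Let D = {pmin..pmax}, s = (I - B)^-1 c and g(p) = prod_i p_i^s_i, so kappa = h o g.
   (1) Spectral part: a real matrix has finitely many eigenvalues, so every real eigenvalue r of B
       satisfies |r| <= rho(B) < 1.  Hence I - B is invertible, and by a Collatz-Wielandt argument
       (Brouwer on a simplex) s = B s + c is componentwise nonnegative.
   (2) Log-Lipschitz part: integrating the elasticities of I along an exponential path shows that
       ln I_j drops by at most sum_i B_ij (ln q_i - ln y_i) when p rises from y to q.  For a fixed point
       y and a feasible x (I x <= x), writing d = ln x - ln y = d+ - d-, this gives d-_j <= (B^T d+)_j,
       and together with s = B s + c, c > 0 it yields ln g(x) - ln g(y) = s . d > 0 whenever x <> y.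
   (3) Brouwer gives a fixed point in D; by (2) it is the strict minimiser of g over the feasible set,
       hence the unique fixed point.  Since h has strictly increasing components, Pareto dominance for
       kappa is exactly strict decrease of g, so a strict minimiser of g is the unique Pareto optimum. *)

section \<open>Eigenvalues and the spectral radius\<close>

lemma eigenvectors_independent:
  fixes M :: "'a::field^'n^'n" and ev :: "'a \<Rightarrow> 'a^'n"
  assumes "finite L" and "\<forall>l\<in>L. ev l \<noteq> 0 \<and> M *v ev l = l *s ev l"
  shows "vec.independent (ev ` L)"
  using assms
proof (induction L rule: finite_induct)
  case empty
  then show ?case by (simp add: vec.independent_empty)
next
  case (insert mu L)
  define S where "S = ev ` L"
  have ind: "vec.independent S" using insert unfolding S_def by simp
  have finS: "finite S" using insert unfolding S_def by simp
  have ev_mu: "ev mu \<noteq> 0" "M *v ev mu = mu *s ev mu" using insert.prems by auto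
  define g where "g w = (SOME l. l \<in> L \<and> ev l = w)" for w
  have g: "g w \<in> L \<and> ev (g w) = w" if "w \<in> S" for w
    unfolding g_def by (rule someI_ex) (use that in \<open>auto simp: S_def\<close>)
  have Mw: "M *v w = g w *s w" if "w \<in> S" for w
    using g[OF that] insert.prems by auto
  have g_ne: "g w \<noteq> mu" if "w \<in> S" for w using g[OF that] insert.hyps by auto
  have "ev mu \<notin> vec.span S"
  proof
    assume "ev mu \<in> vec.span S"
    then obtain u where u: "ev mu = (\<Sum>w\<in>S. u w *s w)"
      using vec.span_finite[OF finS] by auto
    have "(\<Sum>w\<in>S. (mu * u w) *s w) = mu *s ev mu"
      unfolding u by (simp add: vec.scale_sum_right)
    also have "\<dots> = M *v ev mu" using ev_mu(2) by simp
    also have "\<dots> = (\<Sum>w\<in>S. u w *s (M *v w))"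
      unfolding u by (simp only: vec.sum[of M] vec.scale[of M])
    also have "\<dots> = (\<Sum>w\<in>S. (u w * g w) *s w)"
      by (rule sum.cong) (simp_all add: Mw)
    finally have eq: "(\<Sum>w\<in>S. (mu * u w) *s w) = (\<Sum>w\<in>S. (u w * g w) *s w)" .
    have "(\<Sum>w\<in>S. (u w * (g w - mu)) *s w) = (\<Sum>w\<in>S. (u w * g w) *s w - (mu * u w) *s w)"
      by (rule sum.cong) (simp_all add: algebra_simps vec.scale_left_diff_distrib)
    also have "\<dots> = 0" using eq by (simp add: sum_subtractf)
    finally have combination: "(\<Sum>w\<in>S. (u w * (g w - mu)) *s w) = 0" .
    have trivial_combinations: "\<forall>c. (\<Sum>v\<in>S. c v *s v) = 0 \<longrightarrow> (\<forall>v\<in>S. c v = 0)"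
      using ind unfolding vec.independent_explicit by (rule conjunct2)
    have "\<forall>w\<in>S. u w * (g w - mu) = 0"
      using trivial_combinations[rule_format, of "\<lambda>w. u w * (g w - mu)", OF combination] by blast
    then have "\<forall>w\<in>S. u w = 0" using g_ne by auto
    then have "ev mu = 0" unfolding u by simp
    then show False using ev_mu(1) by simp
  qed
  then show ?case using ind unfolding S_def image_insert by (rule vec.independent_insertI)
qed

text \<open>Hence a square matrix over a field has only finitely many eigenvalues: more than
  \<open>dim\<close> of them would give too many independent vectors.\<close>
lemma finite_eigenvalues:
  fixes M :: "'a::field^'n^'n"
  shows "finite {l. \<exists>v. v \<noteq> 0 \<and> M *v v = l *s v}"
proof (rule ccontr)
  let ?E = "{l. \<exists>v. v \<noteq> 0 \<and> M *v v = l *s v}"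
  assume inf: "infinite ?E"
  define ev where "ev l = (SOME v. v \<noteq> 0 \<and> M *v v = l *s v)" for l
  have ev: "ev l \<noteq> 0 \<and> M *v ev l = l *s ev l" if "l \<in> ?E" for l
  proof -
    have "\<exists>v. v \<noteq> 0 \<and> M *v v = l *s v" using that by simp
    then show ?thesis unfolding ev_def by (rule someI_ex)
  qed
  have inj: "inj_on ev ?E"
  proof (rule inj_onI)
    fix a b assume ab: "a \<in> ?E" "b \<in> ?E" "ev a = ev b"
    have "a *s ev a = M *v ev a" using ev[OF ab(1)] by simp
    also have "\<dots> = b *s ev a" using ev[OF ab(2)] ab(3) by simp
    finally have "a = b \<or> ev a = 0" by simp
    then show "a = b" using ev[OF ab(1)] by simp
  qed
  define d where "d = vec.dim (UNIV :: ('a^'n) set)"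
  obtain L where L: "L \<subseteq> ?E" "finite L" "card L = Suc d"
    using infinite_arbitrarily_large[OF inf] by blast
  have "\<forall>l\<in>L. ev l \<noteq> 0 \<and> M *v ev l = l *s ev l" by (intro ballI ev subsetD[OF L(1)])
  then have "vec.independent (ev ` L)" by (rule eigenvectors_independent[OF L(2)])
  then have "card (ev ` L) \<le> d"
    unfolding d_def by (rule vec.independent_card_le_dim[OF subset_UNIV])
  moreover have "card (ev ` L) = Suc d" using L(3) card_image[OF inj_on_subset[OF inj L(1)]] by simp
  ultimately show False by simp
qed

lemma real_eigenvalue_le_spectral_radius:
  fixes B :: "real^'n^'n" and v :: "real^'n"
  assumes "v \<noteq> 0" and "B *v v = r *s v"
  shows "\<bar>r\<bar> \<le> spectral_radius_real B"
proof -
  let ?cv = "\<chi> i. complex_of_real (v $ i)"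
  have "(B *v v) $ i = r * v $ i" for i using assms(2) by simp
  then have cv_eigen: "(\<chi> i j. complex_of_real (B $ i $ j)) *v ?cv = complex_of_real r *s ?cv"
    by (simp add: vec_eq_iff matrix_vector_mult_def flip: of_real_mult of_real_sum)
  have cv_nonzero: "?cv \<noteq> 0" using assms(1) by (auto simp: vec_eq_iff)
  have eig: "complex_eigenvalue B (complex_of_real r)"
    unfolding complex_eigenvalue_def by (intro exI[where x = ?cv] conjI cv_nonzero cv_eigen)
  have "finite {l. complex_eigenvalue B l}"
    unfolding complex_eigenvalue_def by (rule finite_eigenvalues)
  moreover have "{cmod l | l. complex_eigenvalue B l} = cmod ` {l. complex_eigenvalue B l}" by auto
  ultimately have "finite {cmod l | l. complex_eigenvalue B l}" by simp
  moreover have "cmod (complex_of_real r) \<in> {cmod l | l. complex_eigenvalue B l}"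
    using eig by blast
  ultimately have "cmod (complex_of_real r) \<le> spectral_radius_real B"
    unfolding spectral_radius_real_def by (rule Max_ge)
  then show ?thesis by simp
qed

section \<open>A Collatz--Wielandt bound for nonnegative matrices\<close>

definition subinvariant_simplex :: "real^'n^'n \<Rightarrow> (real^'n) set" where
  "subinvariant_simplex B =
     {w. (\<forall>i. 0 \<le> w $ i) \<and> sum (($) w) UNIV = 1 \<and> (\<forall>i. w $ i \<le> (B *v w) $ i)}"

lemma subinvariant_simplex_compact:
  fixes B :: "real^'n^'n"
  shows "compact (subinvariant_simplex B)"
proof -
  have "closed (subinvariant_simplex B)"
    unfolding subinvariant_simplex_def matrix_vector_mult_def
    by (intro closed_Collect_conj closed_Collect_all closed_Collect_le closed_Collect_eq
        continuous_intros)
  moreover have "bounded (subinvariant_simplex B)"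
    unfolding bounded_iff
  proof (intro exI ballI)
    fix w assume "w \<in> subinvariant_simplex B"
    then show "norm w \<le> 1"
      using norm_le_l1_cart[of w] by (simp add: subinvariant_simplex_def)
  qed
  ultimately show ?thesis by (simp add: compact_eq_bounded_closed)
qed

lemma subinvariant_simplex_convex:
  fixes B :: "real^'n^'n"
  shows "convex (subinvariant_simplex B)"
  unfolding convex_def
proof (intro ballI allI impI)
  fix x y :: "real^'n" and u w :: real
  assume xy: "x \<in> subinvariant_simplex B" "y \<in> subinvariant_simplex B"
    and uw: "0 \<le> u" "0 \<le> w" "u + w = 1"
  have "u * x $ i + w * y $ i \<le> u * (B *v x) $ i + w * (B *v y) $ i" for i
    using xy uw by (intro add_mono mult_left_mono) (auto simp: subinvariant_simplex_def)
  moreover have "sum (($) (u *\<^sub>R x + w *\<^sub>R y)) UNIV = u * sum (($) x) UNIV + w * sum (($) y) UNIV"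
    by (simp add: sum.distrib sum_distrib_left)
  ultimately show "u *\<^sub>R x + w *\<^sub>R y \<in> subinvariant_simplex B"
    using xy uw
    by (auto simp: subinvariant_simplex_def matrix_vector_right_distrib matrix_vector_mult_scaleR)
qed

text \<open>For nonnegative \<open>B\<close>, normalising \<open>B w\<close> maps the simplex into itself;
  the normalising sum is at least 1 because \<open>w \<le> B w\<close>.\<close>
lemma subinvariant_simplex_normalised_map:
  fixes B :: "real^'n^'n"
  assumes B_nonneg: "\<And>i j. 0 \<le> B $ i $ j" and wK: "w \<in> subinvariant_simplex B"
  shows "1 \<le> sum (($) (B *v w)) UNIV"
    and "(1 / sum (($) (B *v w)) UNIV) *\<^sub>R (B *v w) \<in> subinvariant_simplex B"
proof -
  have mono: "(B *v a) $ i \<le> (B *v b) $ i" if "\<And>j. a $ j \<le> b $ j" for a b i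
    unfolding matrix_vector_mult_def by (simp add: B_nonneg mult_left_mono sum_mono that)
  have w: "\<And>j. 0 \<le> w $ j" "\<And>j. w $ j \<le> (B *v w) $ j" "sum (($) w) UNIV = 1"
    using wK by (auto simp: subinvariant_simplex_def)
  define t where "t = sum (($) (B *v w)) UNIV"
  show t1: "1 \<le> sum (($) (B *v w)) UNIV"
    using sum_mono[of UNIV "($) w" "($) (B *v w)"] w by simp
  have "0 \<le> (B *v w) $ i" for i using mono[of 0 w i] w by simp
  moreover have "(B *v w) $ i \<le> (B *v (B *v w)) $ i" for i by (rule mono) (rule w(2))
  ultimately show "(1 / t) *\<^sub>R (B *v w) \<in> subinvariant_simplex B"
    using t1 unfolding t_def
    by (auto simp: subinvariant_simplex_def matrix_vector_mult_scaleR divide_right_mono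
        sum_divide_distrib[symmetric])
qed

text \<open>Collatz--Wielandt: if a nonnegative matrix does not shrink some nonzero nonnegative
  vector, it has a real eigenvalue \<open>r \<ge> 1\<close> (found by Brouwer's theorem).\<close>
lemma collatz_wielandt:
  fixes B :: "real^'n^'n" and v :: "real^'n"
  assumes B_nonneg: "\<And>i j. 0 \<le> B $ i $ j" and v_nonneg: "\<And>i. 0 \<le> v $ i" and "v \<noteq> 0"
    and v_sub: "\<And>i. v $ i \<le> (B *v v) $ i"
  obtains r w where "1 \<le> r" "w \<noteq> 0" "B *v w = r *s w"
proof -
  let ?K = "subinvariant_simplex B"
  define f where "f w = (1 / sum (($) (B *v w)) UNIV) *\<^sub>R (B *v w)" for w
  obtain i where "v $ i \<noteq> 0" using \<open>v \<noteq> 0\<close> by (metis vec_eq_iff zero_index)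
  then have "0 < v $ i" using v_nonneg[of i] by simp
  also have "v $ i \<le> sum (($) v) UNIV" by (rule member_le_sum) (auto simp: v_nonneg)
  finally have sv: "0 < sum (($) v) UNIV" .
  have "(1 / sum (($) v) UNIV) *\<^sub>R v \<in> ?K"
    using sv v_sub
    by (auto simp: subinvariant_simplex_def v_nonneg matrix_vector_mult_scaleR divide_right_mono
        sum_divide_distrib[symmetric])
  then have "?K \<noteq> {}" by blast
  moreover have "continuous_on ?K f"
    unfolding f_def matrix_vector_mult_def
    by (intro continuous_intros)
      (use subinvariant_simplex_normalised_map(1)[OF B_nonneg] in \<open>fastforce simp: matrix_vector_mult_def\<close>)
  moreover have "f \<in> ?K \<rightarrow> ?K"
    unfolding f_def using subinvariant_simplex_normalised_map(2)[OF B_nonneg] by blast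
  ultimately obtain w where wK: "w \<in> ?K" and "f w = w"
    using brouwer[OF subinvariant_simplex_compact subinvariant_simplex_convex] by blast
  define t where "t = sum (($) (B *v w)) UNIV"
  have t1: "1 \<le> t" using subinvariant_simplex_normalised_map(1)[OF B_nonneg wK] by (simp add: t_def)
  have "B *v w = t *\<^sub>R w"
    using \<open>f w = w\<close> t1 unfolding f_def t_def[symmetric] by (metis divide_eq_0_iff scaleR_scaleR
        nonzero_mult_div_cancel_left scaleR_one times_divide_eq_right zero_le_one not_one_le_zero)
  moreover have "w \<noteq> 0" using wK by (auto simp: subinvariant_simplex_def)
  ultimately show ?thesis using t1 that by (simp add: scalar_mult_eq_scaleR)
qed

lemma matrix_inv_right:
  fixes A :: "'a::semiring_1^'n^'n"
  assumes "invertible A"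
  shows "A ** matrix_inv A = mat 1"
proof -
  have "\<exists>A'. A ** A' = mat 1 \<and> A' ** A = mat 1" using assms unfolding invertible_def .
  then show ?thesis unfolding matrix_inv_def by (rule someI2_ex) (rule conjunct1)
qed

lemma neumann_solution_nonneg:
  fixes B :: "real^'n^'n" and c :: "real^'n"
  assumes B_nonneg: "\<And>i j. 0 \<le> B $ i $ j" and rho: "spectral_radius_real B < 1"
    and c_nonneg: "\<And>i. 0 \<le> c $ i"
  defines "s \<equiv> matrix_inv (mat 1 - B) *v c"
  shows "s = B *v s + c" and "\<And>i. 0 \<le> s $ i"
proof -
  have no_eig: "\<bar>r\<bar> < 1" if "w \<noteq> 0" "B *v w = r *s w" for w r
    using real_eigenvalue_le_spectral_radius[OF that] rho by simp
  have "\<forall>x. (mat 1 - B) *v x = 0 \<longrightarrow> x = 0"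
  proof (intro allI impI, rule ccontr)
    fix x assume "(mat 1 - B) *v x = 0"
    assume "x \<noteq> 0"
    moreover have "B *v x = 1 *s x"
      using \<open>(mat 1 - B) *v x = 0\<close> by (simp add: matrix_vector_mult_diff_rdistrib)
    ultimately show False using no_eig[of x 1] by simp
  qed
  then have "invertible (mat 1 - B)"
    unfolding invertible_left_inverse matrix_left_invertible_ker[symmetric] .
  then have "(mat 1 - B) ** matrix_inv (mat 1 - B) = mat 1"
    by (rule matrix_inv_right)
  then have "(mat 1 - B) *v s = c"
    unfolding s_def by (simp add: matrix_vector_mul_assoc)
  then show s_eq: "s = B *v s + c"
    by (simp add: matrix_vector_mult_diff_rdistrib algebra_simps)
  define m where "m = (\<chi> i. max 0 (- s $ i))"
  have m_nonneg: "0 \<le> m $ i" for i unfolding m_def by simp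
  have m_sub: "m $ i \<le> (B *v m) $ i" for i
  proof -
    have "- (B *v s) $ i = (\<Sum>j\<in>UNIV. B $ i $ j * (- s $ j))"
      by (simp add: matrix_vector_mult_def sum_negf)
    also have "\<dots> \<le> (\<Sum>j\<in>UNIV. B $ i $ j * m $ j)"
      by (intro sum_mono mult_left_mono) (simp_all add: m_def B_nonneg)
    also have "\<dots> = (B *v m) $ i" by (simp add: matrix_vector_mult_def)
    finally have "- (B *v s) $ i \<le> (B *v m) $ i" .
    moreover have "0 \<le> (B *v m) $ i"
      unfolding matrix_vector_mult_def by (simp add: sum_nonneg B_nonneg m_nonneg)
    moreover have "s $ i = (B *v s) $ i + c $ i" using arg_cong[OF s_eq, of "\<lambda>v. v $ i"] by simp
    ultimately show ?thesis using c_nonneg[of i] by (simp add: m_def)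
  qed
  have "m = 0"
  proof (rule ccontr)
    assume "m \<noteq> 0"
    then obtain r w where "1 \<le> r" "w \<noteq> 0" "B *v w = r *s w"
      using collatz_wielandt[OF B_nonneg m_nonneg _ m_sub] by blast
    then show False using no_eig[of w r] by simp
  qed
  then have "max 0 (- s $ i) = 0" for i unfolding m_def by (metis vec_lambda_beta zero_index)
  then show "0 \<le> s $ i" for i by (metis max.bounded_iff neg_le_0_iff_le order_refl)
qed

section \<open>Logarithmic contraction of the interference function\<close>

text \<open>Points with positive coordinates are interior to the nonnegative orthant, so
  differentiability on the orthant gives ordinary differentiability there.\<close>
lemma differentiable_at_positive:
  fixes I :: "real^'n \<Rightarrow> real^'n"
  assumes I_diff: "I differentiable_on {p. nonneg_vec p}" and p_pos: "\<forall>i. 0 < p $ i"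
  shows "I differentiable (at p)"
proof -
  let ?P = "{p::real^'n. \<forall>i. 0 < p $ i}"
  have "?P = (\<Inter>i\<in>UNIV. {p. 0 < p $ i})" by auto
  also have "open \<dots>" by (intro open_INT ballI open_Collect_less continuous_intros) simp_all
  finally have "open ?P" .
  moreover have sub: "?P \<subseteq> {p. nonneg_vec p}" by (auto simp: nonneg_vec_def less_imp_le)
  ultimately have "p \<in> interior {p. nonneg_vec p}"
    using interior_maximal[OF sub] p_pos by auto
  then have "at p within {p. nonneg_vec p} = at p" by (rule at_within_interior)
  moreover have "I differentiable (at p within {p. nonneg_vec p})"
    using I_diff sub p_pos unfolding differentiable_on_def by blast
  ultimately show ?thesis by simp
qed

text \<open>The path from \<open>y\<close> to \<open>q\<close> that is a straight line in logarithmic coordinates.\<close>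
definition exp_path :: "real^'n \<Rightarrow> real^'n \<Rightarrow> real \<Rightarrow> real^'n" where
  "exp_path y q t = (\<Sum>i\<in>UNIV. (y $ i * exp (t * (ln (q $ i) - ln (y $ i)))) *\<^sub>R axis i 1)"

lemma exp_path_nth: "exp_path y q t $ k = y $ k * exp (t * (ln (q $ k) - ln (y $ k)))"
  unfolding exp_path_def by (simp add: sum_component axis_def if_distrib cong: if_cong)

lemma exp_path_derivative:
  "(exp_path y q has_vector_derivative
     (\<Sum>i\<in>UNIV. (y $ i * exp (t * (ln (q $ i) - ln (y $ i))) * (ln (q $ i) - ln (y $ i)))
        *\<^sub>R axis i 1)) (at t)"
  unfolding exp_path_def by (auto intro!: derivative_eq_intros simp: mult_ac)

lemma exp_path_ends_between:
  fixes y q :: "real^'n"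
  assumes "\<forall>i. 0 < y $ i" and "y \<le> q"
  shows "exp_path y q 0 = y" and "exp_path y q 1 = q"
    and "\<And>t. 0 \<le> t \<Longrightarrow> t \<le> 1 \<Longrightarrow> exp_path y q t \<in> {y..q}"
proof -
  have pos: "0 < y $ i" "0 < q $ i" for i
    using assms by (auto simp: less_eq_vec_def intro: order_less_le_trans)
  show "exp_path y q 0 = y" by (simp add: vec_eq_iff exp_path_nth)
  show "exp_path y q 1 = q"
    using pos by (auto simp: vec_eq_iff exp_path_nth exp_diff less_imp_neq[symmetric])
  fix t :: real assume t: "0 \<le> t" "t \<le> 1"
  have "y $ k \<le> exp_path y q t $ k \<and> exp_path y q t $ k \<le> q $ k" for k
  proof -
    define e where "e = ln (q $ k) - ln (y $ k)"
    have e: "0 \<le> e" using assms(2) pos unfolding e_def less_eq_vec_def by simp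
    have "y $ k \<le> y $ k * exp (t * e)" using e t pos(1)[of k] by simp
    moreover have "y $ k * exp (t * e) \<le> y $ k * exp e"
      using e t pos(1)[of k] by (simp add: mult_left_le_one_le)
    moreover have "y $ k * exp e = q $ k"
      using pos[of k] by (simp add: e_def exp_diff less_imp_neq[symmetric])
    ultimately show ?thesis unfolding exp_path_nth e_def[symmetric] by simp
  qed
  then show "exp_path y q t \<in> {y..q}" by (simp add: less_eq_vec_def)
qed

lemma log_interference_lower_bound:
  fixes I :: "real^'n \<Rightarrow> real^'n" and y q :: "real^'n" and B :: "real^'n^'n"
  assumes y_pos: "\<forall>i. 0 < y $ i" and "y \<le> q"
    and I_pos: "\<And>p. p \<in> {y..q} \<Longrightarrow> 0 < I p $ j"
    and I_diff: "\<And>p. p \<in> {y..q} \<Longrightarrow> I differentiable (at p)"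
    and elasticity: "\<And>i p. p \<in> {y..q} \<Longrightarrow> \<bar>partial_deriv I i j p * p $ i / I p $ j\<bar> \<le> B $ i $ j"
  shows "ln (I y $ j) - (\<Sum>i\<in>UNIV. B $ i $ j * (ln (q $ i) - ln (y $ i))) \<le> ln (I q $ j)"
proof -
  define e where "e i = ln (q $ i) - ln (y $ i)" for i
  have e_nonneg: "0 \<le> e i" for i
    using \<open>y \<le> q\<close> y_pos unfolding e_def less_eq_vec_def
    by (metis ln_le_cancel_iff diff_ge_0_iff_ge order_less_le_trans)
  define K where "K = (\<Sum>i\<in>UNIV. B $ i $ j * e i)"
  let ?P = "exp_path y q"
  define phi where "phi t = ln (I (?P t) $ j) + t * K" for t
  have "phi 0 \<le> phi 1"
  proof (rule DERIV_nonneg_imp_nondecreasing[of 0 1 phi])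
    fix t :: real assume "0 \<le> t" "t \<le> 1"
    then have Pt: "?P t \<in> {y..q}" by (rule exp_path_ends_between(3)[OF y_pos \<open>y \<le> q\<close>])
    define D where "D = frechet_derivative I (at (?P t))"
    define v where "v = (\<Sum>i\<in>UNIV. (y $ i * exp (t * e i) * e i) *\<^sub>R axis i (1::real))"
    have ID: "(I has_derivative D) (at (?P t))"
      using I_diff[OF Pt] unfolding D_def by (simp add: frechet_derivative_works)
    have "((\<lambda>t. I (?P t)) has_vector_derivative D v) (at t)"
      using vector_derivative_diff_chain_within[OF exp_path_derivative has_derivative_at_withinI[OF ID]]
      by (simp add: o_def v_def e_def)
    then have "((\<lambda>t. I (?P t) $ j) has_real_derivative D v $ j) (at t)"
      using bounded_linear.has_vector_derivative[OF bounded_linear_vec_nth]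
      by (fastforce simp: has_real_derivative_iff_has_vector_derivative)
    then have phi': "(phi has_real_derivative (D v $ j / I (?P t) $ j + K)) (at t)"
      unfolding phi_def using I_pos[OF Pt] by (auto intro!: derivative_eq_intros)
    have "D v $ j = (\<Sum>i\<in>UNIV. (y $ i * exp (t * e i) * e i) * partial_deriv I i j (?P t))"
      unfolding v_def partial_deriv_def D_def[symmetric]
      using has_derivative_linear[OF ID] by (simp add: linear_sum linear_scale sum_component)
    then have "D v $ j / I (?P t) $ j + K
         = (\<Sum>i\<in>UNIV. e i * (partial_deriv I i j (?P t) * ?P t $ i / I (?P t) $ j + B $ i $ j))"
      unfolding K_def by (simp add: sum_divide_distrib sum.distrib[symmetric] exp_path_nth e_def algebra_simps)
    also have "\<dots> \<ge> 0"
    proof (rule sum_nonneg)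
      fix i
      have "0 \<le> partial_deriv I i j (?P t) * ?P t $ i / I (?P t) $ j + B $ i $ j"
        using elasticity[OF Pt, of i] by linarith
      then show "0 \<le> e i * (partial_deriv I i j (?P t) * ?P t $ i / I (?P t) $ j + B $ i $ j)"
        using e_nonneg[of i] by simp
    qed
    finally show "\<exists>d. (phi has_real_derivative d) (at t) \<and> 0 \<le> d" using phi' by blast
  qed simp
  then show ?thesis
    unfolding phi_def exp_path_ends_between(1,2)[OF y_pos \<open>y \<le> q\<close>] K_def e_def by simp
qed

lemma fixed_point_log_comparison:
  fixes I :: "real^'n \<Rightarrow> real^'n" and B :: "real^'n^'n" and a b x y :: "real^'n"
  assumes a_pos: "\<forall>i. 0 < a $ i"
    and I_pos: "\<And>p j. p \<in> {a..b} \<Longrightarrow> 0 < I p $ j"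
    and I_anti: "\<And>p q. p \<in> {a..b} \<Longrightarrow> q \<in> {a..b} \<Longrightarrow> p \<le> q \<Longrightarrow> I q \<le> I p"
    and I_diff: "\<And>p. p \<in> {a..b} \<Longrightarrow> I differentiable (at p)"
    and elasticity: "\<And>i j p. p \<in> {a..b} \<Longrightarrow> \<bar>partial_deriv I i j p * p $ i / I p $ j\<bar> \<le> B $ i $ j"
    and y: "y \<in> {a..b}" "I y = y" and x: "x \<in> {a..b}" "I x \<le> x"
  shows "max (ln (y $ j) - ln (x $ j)) 0 \<le> (\<Sum>i\<in>UNIV. B $ i $ j * max (ln (x $ i) - ln (y $ i)) 0)"
proof -
  have pos: "0 < p $ i" if "p \<in> {a..b}" for p i
    using a_pos that by (auto simp: less_eq_vec_def intro: order_less_le_trans)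
  define q where "q = (\<chi> i. max (x $ i) (y $ i))"
  have q: "q \<in> {a..b}" "y \<le> q" "x \<le> q"
    using x y unfolding q_def by (auto simp: less_eq_vec_def le_max_iff_disj)
  have box: "{y..q} \<subseteq> {a..b}" using y q by auto
  have ln_q: "ln (q $ i) - ln (y $ i) = max (ln (x $ i) - ln (y $ i)) 0" for i
    using pos[OF x(1), of i] pos[OF y(1), of i] unfolding q_def by (auto simp: max_def)
  have "ln (y $ j) - (\<Sum>i\<in>UNIV. B $ i $ j * max (ln (x $ i) - ln (y $ i)) 0) \<le> ln (I q $ j)"
    using log_interference_lower_bound[of y q I j B] pos[OF y(1)] q(2) box
      I_pos I_diff elasticity unfolding ln_q y(2) by blast
  also have "\<dots> \<le> ln (x $ j)"
  proof -
    have "I q $ j \<le> x $ j"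
      using I_anti[OF x(1) q(1,3)] x(2) by (metis less_eq_vec_def order_trans)
    then show ?thesis using I_pos[OF q(1), of j] pos[OF x(1), of j] by simp
  qed
  finally have "ln (y $ j) - ln (x $ j) \<le> (\<Sum>i\<in>UNIV. B $ i $ j * max (ln (x $ i) - ln (y $ i)) 0)"
    by simp
  moreover have "0 \<le> B $ i $ j" for i using elasticity[OF y(1), of i j] by linarith
  then have "0 \<le> (\<Sum>i\<in>UNIV. B $ i $ j * max (ln (x $ i) - ln (y $ i)) 0)"
    by (intro sum_nonneg) simp
  ultimately show ?thesis by simp
qed

section \<open>The weighted logarithmic gap\<close>

lemma weighted_sum_positive:
  fixes B :: "real^'n^'n" and s c :: "real^'n" and d :: "'n \<Rightarrow> real"
  assumes s_eq: "s = B *v s + c" and s_nonneg: "\<And>i. 0 \<le> s $ i" and c_pos: "\<And>i. 0 < c $ i"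
    and dominated: "\<And>j. max (- d j) 0 \<le> (\<Sum>i\<in>UNIV. B $ i $ j * max (d i) 0)"
    and "d \<noteq> (\<lambda>_. 0)"
  shows "0 < (\<Sum>i\<in>UNIV. s $ i * d i)"
proof -
  define dp where "dp i = max (d i) 0" for i
  define dm where "dm i = max (- d i) 0" for i
  have d_split: "d i = dp i - dm i" for i unfolding dp_def dm_def by (simp add: max_def)
  have s_comp: "s $ i = (B *v s) $ i + c $ i" for i using arg_cong[OF s_eq, of "\<lambda>v. v $ i"] by simp
  have "(\<Sum>j\<in>UNIV. s $ j * dm j) \<le> (\<Sum>j\<in>UNIV. s $ j * (\<Sum>i\<in>UNIV. B $ i $ j * dp i))"
    unfolding dm_def dp_def by (intro sum_mono mult_left_mono s_nonneg dominated)
  also have "\<dots> = (\<Sum>j\<in>UNIV. \<Sum>i\<in>UNIV. s $ j * (B $ i $ j * dp i))"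
    by (simp add: sum_distrib_left)
  also have "\<dots> = (\<Sum>i\<in>UNIV. \<Sum>j\<in>UNIV. s $ j * (B $ i $ j * dp i))"
    by (rule sum.swap)
  also have "\<dots> = (\<Sum>i\<in>UNIV. dp i * (B *v s) $ i)"
    by (simp add: matrix_vector_mult_def sum_distrib_left mult_ac)
  also have "\<dots> = (\<Sum>i\<in>UNIV. dp i * s $ i - dp i * c $ i)"
    using s_comp by (simp add: algebra_simps)
  finally have "(\<Sum>i\<in>UNIV. dp i * c $ i) \<le> (\<Sum>i\<in>UNIV. s $ i * dp i) - (\<Sum>i\<in>UNIV. s $ i * dm i)"
    by (simp add: sum_subtractf mult.commute)
  also have "\<dots> = (\<Sum>i\<in>UNIV. s $ i * d i)"
    by (simp add: d_split right_diff_distrib sum_subtractf)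
  finally have gap_bound: "(\<Sum>i\<in>UNIV. dp i * c $ i) \<le> (\<Sum>i\<in>UNIV. s $ i * d i)" .
  obtain i0 where "0 < dp i0"
  proof (rule ccontr)
    assume "\<not> thesis"
    with that have dp_zero: "dp i = 0" for i unfolding dp_def by (metis max.cobounded2 order_le_less)
    then have "dm j = 0" for j using dominated[of j] unfolding dp_def dm_def by simp
    then have "d i = 0" for i using dp_zero d_split by simp
    then show False using \<open>d \<noteq> (\<lambda>_. 0)\<close> by auto
  qed
  then have "0 < (\<Sum>i\<in>UNIV. dp i * c $ i)"
    by (intro sum_pos2[of UNIV i0]) (auto simp: c_pos dp_def less_imp_le)
  with gap_bound show ?thesis by simp
qed

lemma prod_powr_pos:
  fixes p s :: "real^'n"
  assumes "\<forall>i. 0 < p $ i"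
  shows "0 < (\<Prod>i\<in>UNIV. p $ i powr s $ i)"
  using assms by (auto intro!: prod_pos simp: less_imp_neq[symmetric])

text \<open>The objective \<open>g(p) = \<Prod>\<^sub>i p\<^sub>i\<^bsup>s\<^sub>i\<^esup>\<close> is strictly smaller at a fixed point than at any other
  feasible point of the box: \<open>ln g(x) - ln g(y) = \<Sum>\<^sub>i s\<^sub>i (ln x\<^sub>i - ln y\<^sub>i) > 0\<close>.\<close>
lemma fixed_point_strict_minimiser:
  fixes I :: "real^'n \<Rightarrow> real^'n" and B :: "real^'n^'n" and a b s c x y :: "real^'n"
  assumes a_pos: "\<forall>i. 0 < a $ i"
    and I_pos: "\<And>p j. p \<in> {a..b} \<Longrightarrow> 0 < I p $ j"
    and I_anti: "\<And>p q. p \<in> {a..b} \<Longrightarrow> q \<in> {a..b} \<Longrightarrow> p \<le> q \<Longrightarrow> I q \<le> I p"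
    and I_diff: "\<And>p. p \<in> {a..b} \<Longrightarrow> I differentiable (at p)"
    and elasticity: "\<And>i j p. p \<in> {a..b} \<Longrightarrow> \<bar>partial_deriv I i j p * p $ i / I p $ j\<bar> \<le> B $ i $ j"
    and s_eq: "s = B *v s + c" and s_nonneg: "\<And>i. 0 \<le> s $ i" and c_pos: "\<And>i. 0 < c $ i"
    and y: "y \<in> {a..b}" "I y = y" and x: "x \<in> {a..b}" "I x \<le> x" "x \<noteq> y"
  shows "(\<Prod>i\<in>UNIV. y $ i powr s $ i) < (\<Prod>i\<in>UNIV. x $ i powr s $ i)"
proof -
  have pos: "0 < p $ i" if "p \<in> {a..b}" for p i
    using a_pos that by (auto simp: less_eq_vec_def intro: order_less_le_trans)
  have ln_prod: "ln (\<Prod>i\<in>UNIV. p $ i powr s $ i) = (\<Sum>i\<in>UNIV. s $ i * ln (p $ i))"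
    if "p \<in> {a..b}" for p
    using pos[OF that] by (simp add: ln_prod ln_powr less_imp_neq[symmetric])
  define d where "d i = ln (x $ i) - ln (y $ i)" for i
  have "max (- d j) 0 \<le> (\<Sum>i\<in>UNIV. B $ i $ j * max (d i) 0)" for j
    using fixed_point_log_comparison[OF a_pos I_pos I_anti I_diff elasticity y x(1,2)]
    unfolding d_def by simp
  moreover have "d \<noteq> (\<lambda>_. 0)"
  proof
    assume "d = (\<lambda>_. 0)"
    then have "x $ i = y $ i" for i using pos[OF x(1), of i] pos[OF y(1), of i]
      unfolding d_def by (metis diff_self ln_inj_iff right_minus_eq)
    then show False using \<open>x \<noteq> y\<close> by (simp add: vec_eq_iff)
  qed
  ultimately have "0 < (\<Sum>i\<in>UNIV. s $ i * d i)"
    using weighted_sum_positive[OF s_eq s_nonneg c_pos] by blast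
  then have "ln (\<Prod>i\<in>UNIV. y $ i powr s $ i) < ln (\<Prod>i\<in>UNIV. x $ i powr s $ i)"
    unfolding ln_prod[OF x(1)] ln_prod[OF y(1)] d_def by (simp add: algebra_simps sum_subtractf)
  then show ?thesis using prod_powr_pos[of x s] prod_powr_pos[of y s] pos x(1) y(1) by simp
qed

section \<open>Pareto optimality\<close>

lemma strictly_increasing_components_dominance:
  fixes h :: "real \<Rightarrow> real^'m"
  assumes h_mono: "\<forall>k. strict_mono_on {0<..} (\<lambda>t. h t $ k)" and "0 < a" "0 < b"
  shows "(h a \<le> h b \<and> h a \<noteq> h b) \<longleftrightarrow> a < b"
proof
  have lt: "h u $ k < h v $ k" if "0 < u" "u < v" for u v k
    using h_mono that unfolding strict_mono_on_def by auto
  show "a < b" if "h a \<le> h b \<and> h a \<noteq> h b"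
  proof (rule ccontr)
    assume "\<not> a < b"
    then consider "a = b" | "b < a" by linarith
    then show False
    proof cases
      case 2
      then have "h b $ k < h a $ k" for k using lt \<open>0 < b\<close> by blast
      then show False using that by (meson less_eq_vec_def not_le)
    qed (use that in simp)
  qed
  show "h a \<le> h b \<and> h a \<noteq> h b" if "a < b"
    using lt[OF \<open>0 < a\<close> that] by (metis less_eq_vec_def less_imp_le order_less_irrefl)
qed

lemma unique_pareto_optimum_of_strict_minimiser:
  fixes kappa :: "'a \<Rightarrow> real^'m" and g :: "'a \<Rightarrow> real"
  assumes "p \<in> F" and minimiser: "\<And>q. q \<in> F \<Longrightarrow> q \<noteq> p \<Longrightarrow> g p < g q"
    and dominance: "\<And>q r. q \<in> F \<Longrightarrow> r \<in> F \<Longrightarrow> (kappa r \<le> kappa q \<and> kappa r \<noteq> kappa q) \<longleftrightarrow> g r < g q"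
  shows "pareto_optimal kappa F p" and "\<And>q. pareto_optimal kappa F q \<Longrightarrow> q = p"
proof -
  show "pareto_optimal kappa F p"
    unfolding pareto_optimal_def using assms by (metis not_less_iff_gr_or_eq)
  show "q = p" if "pareto_optimal kappa F q" for q
    using that assms unfolding pareto_optimal_def by blast
qed

lemma box_fixed_point:
  fixes f :: "real^'n \<Rightarrow> real^'n"
  assumes "a \<le> b" and "continuous_on {a..b} f" and "\<forall>p\<in>{a..b}. f p \<in> {a..b}"
  obtains p where "p \<in> {a..b}" "f p = p"
proof -
  have "compact {a..b}" "convex {a..b}" by (simp_all add: interval_cbox_cart)
  moreover have "{a..b} \<noteq> {}" using assms(1) by auto
  ultimately show ?thesis using brouwer assms(2,3) that by blast
qed

lemma type_II_standard_on_box: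
  fixes I :: "real^'n \<Rightarrow> real^'n" and a b :: "real^'n"
  assumes a_pos: "pos_vec a" and I_diff: "I differentiable_on {p. nonneg_vec p}"
    and I_std: "type_II_standard I"
  shows "\<And>p. p \<in> {a..b} \<Longrightarrow> \<forall>i. 0 < p $ i"
    and "\<And>p j. p \<in> {a..b} \<Longrightarrow> 0 < I p $ j"
    and "\<And>p q. p \<in> {a..b} \<Longrightarrow> q \<in> {a..b} \<Longrightarrow> p \<le> q \<Longrightarrow> I q \<le> I p"
    and "\<And>p. p \<in> {a..b} \<Longrightarrow> I differentiable (at p)"
    and "continuous_on {a..b} I"
proof -
  show pos: "\<forall>i. 0 < p $ i" if "p \<in> {a..b}" for p
    using a_pos that unfolding pos_vec_def by (auto simp: less_eq_vec_def intro: order_less_le_trans)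
  have nonneg: "nonneg_vec p" if "p \<in> {a..b}" for p
    using pos[OF that] unfolding nonneg_vec_def by (simp add: less_imp_le)
  show "0 < I p $ j" if "p \<in> {a..b}" for p j
    using I_std nonneg[OF that] unfolding type_II_standard_def pos_vec_def by blast
  show "I q \<le> I p" if "p \<in> {a..b}" "q \<in> {a..b}" "p \<le> q" for p q
    using I_std nonneg[OF that(1)] nonneg[OF that(2)] that(3) unfolding type_II_standard_def by blast
  show "I differentiable (at p)" if "p \<in> {a..b}" for p
    using differentiable_at_positive[OF I_diff pos[OF that]] .
  show "continuous_on {a..b} I"
    using differentiable_imp_continuous_on[OF I_diff] by (rule continuous_on_subset) (auto intro: nonneg)
qed

theorem mainTheorem4:
  fixes pmin pmax :: "real^'n"
    and I :: "real^'n \<Rightarrow> real^'n"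
    and B :: "real^'n^'n"
    and c :: "real^'n"
    and h :: "real \<Rightarrow> real^'m"
  assumes pmin_pos: "pos_vec pmin"
    and pmin_le: "pmin \<le> pmax"
    and I_diff: "I differentiable_on {p. nonneg_vec p}"
    and I_std: "type_II_standard I"
    and I_maps: "\<forall>p\<in>{pmin..pmax}. I p \<in> {pmin..pmax}"
    and B_max: "\<forall>i j.
        (\<exists>p\<in>{pmin..pmax}. B $ i $ j = \<bar>partial_deriv I i j p * p $ i / I p $ j\<bar>) \<and>
        (\<forall>p\<in>{pmin..pmax}. \<bar>partial_deriv I i j p * p $ i / I p $ j\<bar> \<le> B $ i $ j)"
    and rho: "spectral_radius_real B < 1"
    and c_pos: "pos_vec c"
    and h_diff: "\<forall>t>0. h differentiable (at t)"
    and h_mono: "\<forall>k. strict_mono_on {0<..} (\<lambda>t. h t $ k)"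
    and h_deriv_pos: "\<forall>k. \<forall>t>0. deriv (\<lambda>t. h t $ k) t > 0"
    and feasible: "\<exists>p\<in>{pmin..pmax}. I p \<le> p"
  shows "let s = matrix_inv (mat 1 - B) *v c;
             kappa = (\<lambda>p::real^'n. h (\<Prod>i\<in>UNIV. p $ i powr s $ i));
             F = {p \<in> {pmin..pmax}. I p \<le> p}
         in \<exists>pstar. pstar \<in> {pmin..pmax} \<and> I pstar = pstar \<and>
              (\<forall>q\<in>{pmin..pmax}. I q = q \<longrightarrow> q = pstar) \<and>
              pareto_optimal kappa F pstar \<and>
              (\<forall>q. pareto_optimal kappa F q \<longrightarrow> q = pstar)"
proof -
  let ?D = "{pmin..pmax}" and ?F = "{p \<in> {pmin..pmax}. I p \<le> p}"
  define s where "s = matrix_inv (mat 1 - B) *v c"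
  define g where "g p = (\<Prod>i\<in>UNIV. p $ i powr s $ i)" for p :: "real^'n"
  note box = type_II_standard_on_box[OF pmin_pos I_diff I_std, where b = pmax]
  have elasticity: "\<bar>partial_deriv I i j p * p $ i / I p $ j\<bar> \<le> B $ i $ j" if "p \<in> ?D" for i j p
    using B_max that by blast
  have B_nonneg: "0 \<le> B $ i $ j" for i j
    using elasticity[of pmin i j] pmin_le by (meson abs_ge_zero atLeastAtMost_iff order_refl order_trans)
  have c_pos': "\<And>i. 0 < c $ i" using c_pos unfolding pos_vec_def by blast
  have s_eq: "s = B *v s + c" and s_nonneg: "\<And>i. 0 \<le> s $ i"
    using neumann_solution_nonneg[OF B_nonneg rho, of c] c_pos' unfolding s_def by (auto simp: less_imp_le)
  have min: "g y < g x" if "y \<in> ?D" "I y = y" "x \<in> ?F" "x \<noteq> y" for x y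
    using fixed_point_strict_minimiser[OF pmin_pos[unfolded pos_vec_def] box(2-4) elasticity s_eq
        s_nonneg c_pos' that(1,2), of x] that(3,4)
    unfolding g_def by simp
  obtain pstar where pstar: "pstar \<in> ?D" "I pstar = pstar"
    by (rule box_fixed_point[OF pmin_le box(5) I_maps])
  have fixed_unique: "\<forall>q\<in>?D. I q = q \<longrightarrow> q = pstar"
  proof (intro ballI impI, rule ccontr)
    fix q assume "q \<in> ?D" "I q = q" "q \<noteq> pstar"
    then have "g pstar < g q" "g q < g pstar" using min[of pstar q] min[of q pstar] pstar by auto
    then show False by simp
  qed
  have g_pos: "0 < g p" if "p \<in> ?D" for p unfolding g_def by (rule prod_powr_pos[OF box(1)[OF that]])
  have dominance: "(h (g r) \<le> h (g q) \<and> h (g r) \<noteq> h (g q)) \<longleftrightarrow> g r < g q"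
    if "q \<in> ?F" "r \<in> ?F" for q r
    using strictly_increasing_components_dominance[OF h_mono g_pos g_pos] that by simp
  have pstar_F: "pstar \<in> ?F" using pstar by simp
  have min_F: "g pstar < g q" if "q \<in> ?F" "q \<noteq> pstar" for q using min pstar that by simp
  note pareto = unique_pareto_optimum_of_strict_minimiser[of pstar ?F g "\<lambda>p. h (g p)",
      OF pstar_F min_F dominance]
  have kappa_eq: "(\<lambda>p::real^'n. h (\<Prod>i\<in>UNIV. p $ i powr s $ i)) = (\<lambda>p. h (g p))"
    by (simp add: g_def)
  have "\<forall>q. pareto_optimal (\<lambda>p. h (g p)) ?F q \<longrightarrow> q = pstar" using pareto(2) by blast
  with fixed_unique show ?thesis
    unfolding Let_def s_def[symmetric] kappa_eq by (intro exI[of _ pstar] conjI pstar pareto(1))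
qed

end
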